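(* Consider one group of $p'$ PEs holding locally sorted string arrays $S_0',\dots,S_{p'-1}'$ with concatenation $S'$, partitioned into $r$ buckets by string-based regular sampling with sampling factor $v>0$, where $\omega=|S'|/(p'(v+1))$ need not be an integer and samples are drawn with spacing $\lceil\omega\rceil$. If $k\ge1$ and $|S'|=\Omega(p'(v+1)k)$, then every bucket $B^j$ contains at most $\bigl(1+\frac{r}{v}\bigr)\bigl(1+\frac1k\bigr)\frac{|S'|}{r}$ strings.
   Context: String-based regular sampling with sampling factor $v$ (where $r$ divides $p'$): $p'(v+1)$ samples (possibly overlapping) are drawn from the sorted local arrays such that on each PE at most $\lceil\omega\rceil$ strings lie between two consecutive local samples, where $\omega=|S'|/(p'(v+1))$; PE $i$'s samples are $V_i$. The union $V$ of all samples is sorted and splitters $f_j=V[j|V|/r-1]$ for $0<j<r$ are chosen, $f_0=-\infty$, $f_r=\infty$. Buckets are $B^j=\bigcup_i\{s\in S_i':f_j<s\le f_{j+1}\}$, $j=0,\dots,r-1$.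
   Formalization: All strings of $S'$ are pairwise distinct, on each PE at most $\lceil\omega\rceil$ strings also lie before the first and after the last local sample, and $|S'|=\Omega(p'(v+1)k)$ means $|S'|$ is at least one fixed positive multiple of $p'(v+1)k$. The paper assumes this as well. *)

theory Defs
  imports Complex_Main "HOL-Library.List_Lexorder"
begin

text \<open>Strings are lists over a linearly ordered alphabet, compared
lexicographically (HOL-Library.List_Lexorder).  PE i (i < p) holds the locally
sorted array S i; the samples of PE i are given by the list P i of positions
into S i (nondecreasing; equal positions = overlapping samples).\<close>

text \<open>Sampling condition with spacing w: with virtual sentinels at position -1
and at position len, at most w strings lie strictly between two consecutive
(local) samples.\<close>
definition gaps_ok :: "nat \<Rightarrow> nat \<Rightarrow> nat list \<Rightarrow> bool" where
  "gaps_ok w len P \<longleftrightarrow> sorted P \<and> (\<forall>t\<in>set P. t < len) \<and>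
     (let e = (-1::int) # map int P @ [int len]
      in \<forall>t < length e - 1. e ! Suc t - e ! t - 1 \<le> int w)"

definition samples :: "nat \<Rightarrow> (nat \<Rightarrow> 'a::linorder list) \<Rightarrow> (nat \<Rightarrow> nat list) \<Rightarrow> 'a list" where
  "samples p S P = sort (concat (map (\<lambda>i. map (\<lambda>t. S i ! t) (P i)) [0..<p]))"

definition splitter :: "'a list \<Rightarrow> nat \<Rightarrow> nat \<Rightarrow> 'a" where
  "splitter V r j = V ! (j * length V div r - 1)"

text \<open>Membership in bucket j (0 \<le> j < r), with f_0 = -\<infinity> and f_r = \<infinity>.\<close>
definition in_bucket :: "'a::linorder list \<Rightarrow> nat \<Rightarrow> nat \<Rightarrow> 'a \<Rightarrow> bool" where
  "in_bucket V r j s \<longleftrightarrow>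
     (j = 0 \<or> splitter V r j < s) \<and> (Suc j = r \<or> s \<le> splitter V r (Suc j))"

definition bucket_size :: "nat \<Rightarrow> (nat \<Rightarrow> 'a::linorder list) \<Rightarrow> 'a list \<Rightarrow> nat \<Rightarrow> nat \<Rightarrow> nat" where
  "bucket_size p S V r j =
     card {(i, t). i < p \<and> t < length (S i) \<and> in_bucket V r j (S i ! t)}"

end

theory Submission
  imports Defs
begin

(* Let w = \<lceil>\<omega>\<rceil>. Every w + 1 consecutive positions of a local array contain a
   sample, and the strings of PE i that fall into bucket j occupy a contiguous run of
   its sorted array; so the run has at most (w + 1) c_i + w strings, where c_i counts
   the samples of PE i inside it. Since all strings are distinct, these samples are
   distinct elements of V lying between two consecutive splitters, so their total
   number is at most |V|/r. Summing over the p' PEs gives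
   |B^j| \<le> (w + 1) |V|/r + p' w, and w \<le> \<omega> + 1 together with |V| = p'(v + 1) and
   |S'| \<ge> 2 p'(v + 1) k (so c = 2) turns this into the stated bound. *)

lemma int_seq_crossing:
  fixes f :: "nat \<Rightarrow> int"
  assumes "f 0 < a" and "a \<le> f n"
  shows "\<exists>t<n. f t < a \<and> a \<le> f (Suc t)"
  using assms(2)
proof (induction n)
  case 0
  with assms(1) show ?case by simp
next
  case (Suc n)
  show ?case
  proof (cases "a \<le> f n")
    case True
    with Suc.IH show ?thesis using less_SucI by blast
  next
    case False
    with Suc.prems show ?thesis by auto
  qed
qed

definition meets_windows :: "nat \<Rightarrow> nat \<Rightarrow> nat set \<Rightarrow> bool" where
  "meets_windows w len Q \<longleftrightarrow> (\<forall>a. a + w < len \<longrightarrow> (\<exists>q\<in>Q. a \<le> q \<and> q \<le> a + w))"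

lemma gaps_ok_imp_meets_windows:
  assumes "gaps_ok w len P"
  shows "meets_windows w len (set P)"
  unfolding meets_windows_def
proof (intro allI impI)
  fix a assume a: "a + w < len"
  define e where "e = (-1::int) # map int P @ [int len]"
  have gap: "e ! Suc t - e ! t - 1 \<le> int w" if "t \<le> length P" for t
    using assms that unfolding gaps_ok_def e_def Let_def by simp
  have "e ! 0 < int a" "int a \<le> e ! (length P + 1)"
    using a by (simp_all add: e_def nth_append)
  then obtain t where t: "t < length P + 1" "e ! t < int a" "int a \<le> e ! Suc t"
    using int_seq_crossing[of "(!) e"] by blast
  then have up: "e ! Suc t \<le> int a + int w"
    using gap[of t] by linarith
  show "\<exists>q\<in>set P. a \<le> q \<and> q \<le> a + w"
  proof (cases "t = length P")
    case True
    then have "e ! Suc t = int len" by (simp add: e_def nth_append)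
    with up a show ?thesis by simp
  next
    case False
    with t have "t < length P" "e ! Suc t = int (P ! t)" by (simp_all add: e_def nth_append)
    with up t show ?thesis by (intro bexI[of _ "P ! t"]) auto
  qed
qed

lemma card_interval_le_meets_windows:
  assumes Q: "meets_windows w len Q" and "b \<le> len"
  shows "card {a..<b} \<le> (w + 1) * card (Q \<inter> {a..<b}) + w"
  using assms(2)
proof (induction "b - a" arbitrary: a rule: less_induct)
  case less
  show ?case
  proof (cases "b - a \<le> w")
    case True
    then show ?thesis by simp
  next
    case False
    then have "a + w < len" using less.prems by linarith
    then obtain q where q: "q \<in> Q" "a \<le> q" "q \<le> a + w"
      using Q unfolding meets_windows_def by blast
    with False have qb: "q < b" by linarith
    have IH: "card {Suc q..<b} \<le> (w + 1) * card (Q \<inter> {Suc q..<b}) + w"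
      using less q qb by simp
    have "insert q (Q \<inter> {Suc q..<b}) \<subseteq> Q \<inter> {a..<b}"
      using q qb by auto
    then have "card (insert q (Q \<inter> {Suc q..<b})) \<le> card (Q \<inter> {a..<b})"
      by (intro card_mono) auto
    then have "(w + 1) * Suc (card (Q \<inter> {Suc q..<b})) \<le> (w + 1) * card (Q \<inter> {a..<b})"
      by (intro mult_le_mono2) simp
    moreover have "card {a..<b} = (Suc q - a) + card {Suc q..<b}" "Suc q - a \<le> w + 1"
      using q qb by auto
    ultimately show ?thesis
      using IH by simp
  qed
qed

lemma card_convex_le_meets_windows:
  assumes Q: "meets_windows w len Q" and T: "T \<subseteq> {..<len}"
    and convex: "\<And>x y z. x \<in> T \<Longrightarrow> z \<in> T \<Longrightarrow> x \<le> y \<Longrightarrow> y \<le> z \<Longrightarrow> y \<in> T"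
  shows "card T \<le> (w + 1) * card (Q \<inter> T) + w"
proof (cases "T = {}")
  case True
  then show ?thesis by simp
next
  case False
  have fin: "finite T" using T finite_subset by blast
  have interval: "T = {Min T..<Suc (Max T)}"
    using fin False by (auto intro: convex[OF Min_in Max_in] simp: less_Suc_eq_le)
  have "Suc (Max T) \<le> len"
    using T fin False by (meson Max_in Suc_leI lessThan_iff subsetD)
  from card_interval_le_meets_windows[OF Q this, of "Min T"] interval show ?thesis
    by simp
qed

lemma card_convex_positions_le:
  assumes xs: "sorted xs" and P: "gaps_ok w (length xs) P"
    and convex: "\<And>x y z. B x \<Longrightarrow> B z \<Longrightarrow> x \<le> y \<Longrightarrow> y \<le> z \<Longrightarrow> B y"
  shows "card {t. t < length xs \<and> B (xs ! t)} \<le> (w + 1) * card {t \<in> set P. B (xs ! t)} + w"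
proof -
  let ?T = "{t. t < length xs \<and> B (xs ! t)}"
  have "set P \<inter> ?T = {t \<in> set P. B (xs ! t)}"
    using P unfolding gaps_ok_def by auto
  moreover have "card ?T \<le> (w + 1) * card (set P \<inter> ?T) + w"
  proof (rule card_convex_le_meets_windows[OF gaps_ok_imp_meets_windows[OF P]])
    fix x y z assume x: "x \<in> ?T" and z: "z \<in> ?T" and "x \<le> y" "y \<le> z"
    then have "y < length xs" "xs ! x \<le> xs ! y" "xs ! y \<le> xs ! z"
      using sorted_nth_mono[OF xs] by auto
    with x z convex show "y \<in> ?T" by blast
  qed auto
  ultimately show ?thesis by simp
qed

lemma in_bucket_convex:
  "in_bucket V r j x \<Longrightarrow> in_bucket V r j z \<Longrightarrow> x \<le> y \<Longrightarrow> y \<le> z \<Longrightarrow> in_bucket V r j y"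
  unfolding in_bucket_def by (meson order_less_le_trans order_trans)

lemma inj_on_concat_nth:
  assumes "distinct (concat (map S [0..<p]))"
  shows "inj_on (\<lambda>(i, t). S i ! t) (SIGMA i:{..<p}. {..<length (S i)})"
  using assms
proof (induction p)
  case 0
  then show ?case by simp
next
  case (Suc p)
  let ?f = "\<lambda>(i, t). S i ! t"
  have split: "(SIGMA i:{..<Suc p}. {..<length (S i)})
      = (SIGMA i:{..<p}. {..<length (S i)}) \<union> {p} \<times> {..<length (S p)}"
    by (auto simp: less_Suc_eq)
  have "?f ` (SIGMA i:{..<p}. {..<length (S i)}) \<subseteq> set (concat (map S [0..<p]))"
    by force
  moreover have "?f ` ({p} \<times> {..<length (S p)}) \<subseteq> set (S p)"
    by auto
  moreover have "set (concat (map S [0..<p])) \<inter> set (S p) = {}"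
    using Suc.prems by simp
  ultimately have disjoint:
    "?f ` (SIGMA i:{..<p}. {..<length (S i)}) \<inter> ?f ` ({p} \<times> {..<length (S p)}) = {}"
    by blast
  moreover have "inj_on ?f (SIGMA i:{..<p}. {..<length (S i)})"
    using Suc by simp
  moreover have "inj_on ?f ({p} \<times> {..<length (S p)})"
    using Suc.prems by (auto simp: inj_on_def nth_eq_iff_index_eq)
  ultimately show ?case
    unfolding split inj_on_Un by blast
qed

lemma card_bucket_values_le:
  assumes V: "sorted V" "length V = r * L" and j: "j < r"
  shows "card {s \<in> set V. in_bucket V r j s} \<le> L"
proof -
  have splitter: "splitter V r i = V ! (i * L - 1)" for i
    using j by (simp add: splitter_def V(2))
  have "{s \<in> set V. in_bucket V r j s} \<subseteq> (!) V ` {j * L..<Suc j * L}"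
  proof
    fix x assume "x \<in> {s \<in> set V. in_bucket V r j s}"
    then obtain i where i: "i < r * L" "V ! i = x" and x: "in_bucket V r j x"
      by (auto simp: in_set_conv_nth V(2))
    then have L: "0 < L" by (cases L) simp_all
    have lower: "j * L \<le> i"
    proof (rule ccontr)
      assume below: "\<not> j * L \<le> i"
      then have "j \<noteq> 0" by (metis mult_zero_left zero_le)
      moreover have "j * L \<le> r * L" using j by simp
      with below have "i \<le> j * L - 1" "j * L - 1 < r * L" by linarith+
      ultimately show False
        using x i sorted_nth_mono[OF V(1)] by (auto simp: in_bucket_def splitter V(2) leD)
    qed
    show "x \<in> (!) V ` {j * L..<Suc j * L}"
    proof (cases "i < Suc j * L")
      case True
      with lower i show ?thesis by auto
    next
      case False
      \<comment> \<open>x lies beyond the splitter f_(j+1) in V but not above it, so it equals it\<close>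
      then have "Suc j \<noteq> r" using i by auto
      then have "x \<le> V ! (Suc j * L - 1)"
        using x by (simp add: in_bucket_def splitter)
      moreover have "V ! (Suc j * L - 1) \<le> x"
        using False i sorted_nth_mono[OF V(1), of "Suc j * L - 1" i] by (simp add: V(2))
      ultimately have "x = V ! (Suc j * L - 1)" by simp
      with L show ?thesis by (intro image_eqI[of _ _ "Suc j * L - 1"]) auto
    qed
  qed
  then have "card {s \<in> set V. in_bucket V r j s} \<le> card ((!) V ` {j * L..<Suc j * L})"
    by (intro card_mono) auto
  also have "\<dots> \<le> L"
    using card_image_le[of "{j * L..<Suc j * L}" "(!) V"] by simp
  finally show ?thesis .
qed

lemma length_samples: "length (samples p S P) = (\<Sum>i<p. length (P i))"
  by (simp add: samples_def length_concat interv_sum_list_conv_sum_set_nat atLeast0LessThan)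

lemma nth_in_samples: "i < p \<Longrightarrow> t \<in> set (P i) \<Longrightarrow> S i ! t \<in> set (samples p S P)"
  by (auto simp: samples_def)

lemma card_bucket_samples_le:
  assumes distinct: "distinct (concat (map S [0..<p]))"
    and P: "\<forall>i<p. \<forall>t\<in>set (P i). t < length (S i)"
    and L: "(\<Sum>i<p. length (P i)) = r * L" and j: "j < r"
  shows "card (SIGMA i:{..<p}. {t \<in> set (P i). in_bucket (samples p S P) r j (S i ! t)}) \<le> L"
proof -
  let ?V = "samples p S P"
  let ?Q = "SIGMA i:{..<p}. {t \<in> set (P i). in_bucket ?V r j (S i ! t)}"
  have "inj_on (\<lambda>(i, t). S i ! t) ?Q"
    by (rule inj_on_subset[OF inj_on_concat_nth[OF distinct]]) (use P in auto)
  then have "card ?Q = card ((\<lambda>(i, t). S i ! t) ` ?Q)"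
    by (simp add: card_image)
  also have "\<dots> \<le> card {s \<in> set ?V. in_bucket ?V r j s}"
    by (intro card_mono) (auto simp: nth_in_samples)
  also have "\<dots> \<le> L"
  proof (rule card_bucket_values_le)
    show "sorted ?V" by (simp add: samples_def)
  qed (simp_all add: length_samples L j)
  finally show ?thesis .
qed

lemma bucket_size_le:
  assumes sorted: "\<forall>i<p. sorted (S i)" and distinct: "distinct (concat (map S [0..<p]))"
    and gaps: "\<forall>i<p. gaps_ok w (length (S i)) (P i)"
    and L: "(\<Sum>i<p. length (P i)) = r * L" and j: "j < r"
  shows "bucket_size p S (samples p S P) r j \<le> (w + 1) * L + p * w"
proof -
  define B where "B = in_bucket (samples p S P) r j"
  have "bucket_size p S (samples p S P) r j
      = card (SIGMA i:{..<p}. {t. t < length (S i) \<and> B (S i ! t)})"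
    unfolding bucket_size_def B_def by (rule arg_cong[where f = card]) auto
  also have "\<dots> = (\<Sum>i<p. card {t. t < length (S i) \<and> B (S i ! t)})"
    by simp
  also have "\<dots> \<le> (\<Sum>i<p. (w + 1) * card {t \<in> set (P i). B (S i ! t)} + w)"
    by (intro sum_mono card_convex_positions_le)
      (use sorted gaps in_bucket_convex in \<open>auto simp: B_def\<close>)
  also have "\<dots> = (w + 1) * card (SIGMA i:{..<p}. {t \<in> set (P i). B (S i ! t)}) + p * w"
    by (simp add: sum.distrib sum_distrib_left)
  also have "\<dots> \<le> (w + 1) * L + p * w"
    using card_bucket_samples_le[OF distinct _ L j] gaps
    unfolding B_def gaps_ok_def by (intro add_right_mono mult_left_mono) simp_all
  finally show ?thesis .
qed

lemma bucket_bound_arith: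
  fixes N m p v r k w L :: real
  assumes m: "m = p * (v + 1)" and L: "r * L = m"
    and pos: "0 < p" "0 < v" "0 < r" "1 \<le> k" "0 \<le> w"
    and w: "w \<le> N / m + 1" and N: "2 * m * k \<le> N"
  shows "(w + 1) * L + p * w \<le> (1 + r / v) * (1 + 1 / k) * N / r"
proof -
  have "0 < m" using m pos by simp
  have "0 \<le> N" using N \<open>0 < m\<close> pos by (smt (verit) mult_pos_pos)
  have L_eq: "L = m / r" using L pos by (simp add: field_simps)
  then have "0 \<le> L" using \<open>0 < m\<close> pos by simp
  have "(w + 1) * L + p * w \<le> (N / m + 2) * L + p * (N / m + 1)"
    using w pos \<open>0 \<le> L\<close> mult_right_mono[of "w + 1" "N / m + 2" L]
      mult_left_mono[of w "N / m + 1" p] by linarith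
  also have "\<dots> = N / r + 2 * m / r + N / (v + 1) + p"
  proof -
    have "(N / m + 2) * L = N / r + 2 * m / r"
      unfolding L_eq using \<open>0 < m\<close> pos by (simp add: field_simps)
    moreover have "p * (N / m + 1) = N / (v + 1) + p"
      using m pos \<open>0 < m\<close> by (simp add: field_simps)
    ultimately show ?thesis by simp
  qed
  also have "\<dots> \<le> N / r + N / (r * k) + N / v + N / (v * k)"
  proof -
    have "2 * m / r \<le> N / (r * k)"
      using N pos by (simp add: field_simps)
    moreover have "N / (v + 1) \<le> N / v"
      using \<open>0 \<le> N\<close> pos by (intro divide_left_mono) auto
    moreover have "p \<le> N / (v * k)"
      using N m pos by (simp add: field_simps) (smt (verit) mult_left_mono mult_pos_pos)
    ultimately show ?thesis by linarith
  qed
  also have "\<dots> = (1 + r / v) * (1 + 1 / k) * N / r"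
    using pos by (simp add: field_simps)
  finally show ?thesis .
qed

lemma bucket_size_bound:
  fixes p r v j :: nat and k :: real and S :: "nat \<Rightarrow> 'a::linorder list list"
  defines "N \<equiv> \<Sum>i<p. length (S i)"
  assumes pos: "0 < p" "0 < v" "1 \<le> k" and r: "r dvd p" and j: "j < r"
    and sorted: "\<forall>i<p. sorted (S i)" and distinct: "distinct (concat (map S [0..<p]))"
    and gaps: "\<forall>i<p. gaps_ok (nat \<lceil>real N / real (p * (v + 1))\<rceil>) (length (S i)) (P i)"
    and samples: "(\<Sum>i<p. length (P i)) = p * (v + 1)"
    and N: "2 * real (p * (v + 1)) * k \<le> real N"
  shows "real (bucket_size p S (samples p S P) r j)
    \<le> (1 + real r / real v) * (1 + 1 / k) * real N / real r"
proof -
  define w where "w = nat \<lceil>real N / real (p * (v + 1))\<rceil>"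
  obtain L where L: "p * (v + 1) = r * L"
    using r by (metis dvd_def dvd_mult2)
  have "bucket_size p S (samples p S P) r j \<le> (w + 1) * L + p * w"
    using samples L j by (intro bucket_size_le[OF sorted distinct gaps[folded w_def]]) simp_all
  then have "real (bucket_size p S (samples p S P) r j) \<le> real ((w + 1) * L + p * w)"
    by (rule of_nat_mono)
  also have "\<dots> = (real w + 1) * real L + real p * real w"
    by (simp add: algebra_simps)
  also have "\<dots> \<le> (1 + real r / real v) * (1 + 1 / k) * real N / real r"
  proof (rule bucket_bound_arith)
    show "real r * real L = real (p * (v + 1))"
      using L by (metis of_nat_mult)
    have "real w = of_int \<lceil>real N / real (p * (v + 1))\<rceil>"
      unfolding w_def by (simp add: zero_le_divide_iff)
    then show "real w \<le> real N / real (p * (v + 1)) + 1"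
      by simp
  qed (use pos j N in \<open>auto simp: algebra_simps\<close>)
  finally show ?thesis .
qed

theorem theorem16:
  "\<exists>c::real > 0. \<forall>(p::nat) (r::nat) (v::nat) (k::real)
      (S :: nat \<Rightarrow> 'c::linorder list list) (P :: nat \<Rightarrow> nat list).
     (0 < p \<and> 0 < r \<and> r dvd p \<and> 0 < v \<and> 1 \<le> k \<and>
      (\<forall>i<p. sorted (S i)) \<and>
      distinct (concat (map S [0..<p])) \<and>
      (\<forall>i<p. gaps_ok (nat (ceiling (real (\<Sum>i<p. length (S i)) / real (p * (v + 1)))))
                      (length (S i)) (P i)) \<and>
      (\<Sum>i<p. length (P i)) = p * (v + 1) \<and>
      c * real (p * (v + 1)) * k \<le> real (\<Sum>i<p. length (S i)))
     \<longrightarrow> (\<forall>j<r. real (bucket_size p S (samples p S P) r j)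
                 \<le> (1 + real r / real v) * (1 + 1 / k) * real (\<Sum>i<p. length (S i)) / real r)"
  by (intro exI[of _ "2::real"] conjI allI impI) (simp, blast intro: bucket_size_bound)

end
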